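(* Let $K\ge2$ and $M\le N$ be positive integers with $KM>N$, and let $\mathbf{A}_1,\dots,\mathbf{A}_K\in\mathbb{C}^{N\times M}$ be independent random matrices whose entries are drawn from a continuous distribution. Let $\mathbf{A}=[\mathbf{A}_1,\dots,\mathbf{A}_K]\in\mathbb{C}^{N\times KM}$, let the columns of $\mathbf{U}\in\mathbb{C}^{KM\times(KM-N)}$ form a basis of $\mathrm{null}(\mathbf{A})$, write $\mathbf{U}=[\mathbf{U}_1^T,\dots,\mathbf{U}_K^T]^T$ with $\mathbf{U}_i\in\mathbb{C}^{M\times(KM-N)}$, and set $\tilde{\mathbf{A}}=[\mathbf{A}_1\mathbf{U}_1,\dots,\mathbf{A}_K\mathbf{U}_K]\in\mathbb{C}^{N\times K(KM-N)}$. Then, with probability one, $\mathrm{rank}(\tilde{\mathbf{A}})=\min\big((K-1)(KM-N),\,N\big)$. *)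

theory Defs
  imports "HOL-Probability.Probability" "Jordan_Normal_Form.DL_Rank" "Jordan_Normal_Form.Matrix_Kernel"
begin

text \<open>A random input is a family of complex entries a (k,i,j), for block k < K,
  row i < N, column j < M: the (i,j) entry of A_(k+1) (0-based indices).\<close>

definition entry_space :: "nat \<Rightarrow> nat \<Rightarrow> nat \<Rightarrow> (nat \<times> nat \<times> nat \<Rightarrow> complex) measure" where
  "entry_space K N M = PiM ({..<K} \<times> {..<N} \<times> {..<M}) (\<lambda>_. lborel)"

definition Ablock :: "nat \<Rightarrow> nat \<Rightarrow> (nat \<times> nat \<times> nat \<Rightarrow> complex) \<Rightarrow> nat \<Rightarrow> complex mat" where
  "Ablock N M a k = mat N M (\<lambda>(i,j). a (k,i,j))"

definition Amat :: "nat \<Rightarrow> nat \<Rightarrow> nat \<Rightarrow> (nat \<times> nat \<times> nat \<Rightarrow> complex) \<Rightarrow> complex mat" where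
  "Amat K N M a = mat N (K * M) (\<lambda>(i,j). Ablock N M a (j div M) $$ (i, j mod M))"

definition null_basis_mat :: "complex mat \<Rightarrow> complex mat \<Rightarrow> nat \<Rightarrow> bool" where
  "null_basis_mat A U r \<longleftrightarrow>
     U \<in> carrier_mat (dim_col A) r \<and> distinct (cols U) \<and>
     module.lin_indpt class_ring (module_vec TYPE(complex) (dim_col A)) (set (cols U)) \<and>
     module.span class_ring (module_vec TYPE(complex) (dim_col A)) (set (cols U)) = mat_kernel A"

definition Ublock :: "nat \<Rightarrow> complex mat \<Rightarrow> nat \<Rightarrow> complex mat" where
  "Ublock M U k = mat M (dim_col U) (\<lambda>(i,j). U $$ (k * M + i, j))"

definition Atilde :: "nat \<Rightarrow> nat \<Rightarrow> nat \<Rightarrow> (nat \<times> nat \<times> nat \<Rightarrow> complex) \<Rightarrow> complex mat \<Rightarrow> complex mat" where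
  "Atilde K N M a U = (let r = K * M - N in
     mat N (K * r) (\<lambda>(i,j). (Ablock N M a (j div r) * Ublock M U (j div r)) $$ (i, j mod r)))"

end

theory Submission
  imports Defs "Jordan_Normal_Form.DL_Rank_Submatrix" "HOL-Computational_Algebra.Polynomial"
begin

text \<open>Write r = KM - N. The K column blocks of \<open>Atilde\<close> sum to A U = 0, so the last block is a
  combination of the others and the rank is at most (K - 1) r; it is trivially at most N.
  For the lower bound, U is replaced by a kernel matrix whose entries are polynomials in the entries
  of A (Cramer's rule on the leading N \<times> N block). Its columns lie in null(A), the span of the columns
  of U, so the resulting matrix has rank at most that of \<open>Atilde\<close>. One of its minors of size
  min((K - 1) r, N) is a polynomial in the entries that does not vanish at an explicit witness.
  The zero set of such a polynomial is Lebesgue-null (Fubini and induction on the number of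
  variables), hence has probability zero under an absolutely continuous distribution.\<close>

section \<open>Polynomial functions of finitely many complex variables\<close>

inductive_set poly_fun :: "'i set \<Rightarrow> (('i \<Rightarrow> complex) \<Rightarrow> complex) set" for I :: "'i set" where
  poly_fun_const: "(\<lambda>_. c) \<in> poly_fun I"
| poly_fun_coord: "i \<in> I \<Longrightarrow> (\<lambda>a. a i) \<in> poly_fun I"
| poly_fun_add: "f \<in> poly_fun I \<Longrightarrow> g \<in> poly_fun I \<Longrightarrow> (\<lambda>a. f a + g a) \<in> poly_fun I"
| poly_fun_mult: "f \<in> poly_fun I \<Longrightarrow> g \<in> poly_fun I \<Longrightarrow> (\<lambda>a. f a * g a) \<in> poly_fun I"

lemma poly_fun_uminus: "f \<in> poly_fun I \<Longrightarrow> (\<lambda>a. - f a) \<in> poly_fun I"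
  using poly_fun_mult[OF poly_fun_const[of "-1"]] by simp

lemma poly_fun_sum:
  "finite S \<Longrightarrow> (\<And>s. s \<in> S \<Longrightarrow> f s \<in> poly_fun I) \<Longrightarrow> (\<lambda>a. \<Sum>s\<in>S. f s a) \<in> poly_fun I"
  by (induction S rule: finite_induct) (auto intro: poly_fun.intros)

lemma poly_fun_prod:
  "finite S \<Longrightarrow> (\<And>s. s \<in> S \<Longrightarrow> f s \<in> poly_fun I) \<Longrightarrow> (\<lambda>a. \<Prod>s\<in>S. f s a) \<in> poly_fun I"
  by (induction S rule: finite_induct) (auto intro: poly_fun.intros)

lemma poly_fun_cong: "f \<in> poly_fun I \<Longrightarrow> (\<And>i. i \<in> I \<Longrightarrow> a i = b i) \<Longrightarrow> f a = f b"
  by (induction rule: poly_fun.induct) auto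

lemma poly_fun_measurable: "f \<in> poly_fun I \<Longrightarrow> f \<in> borel_measurable (PiM I (\<lambda>_. lborel))"
  by (induction rule: poly_fun.induct) (auto simp del: measurable_lborel1)

lemma poly_fun_insert_as_poly:
  assumes "f \<in> poly_fun (insert i J)" "i \<notin> J"
  shows "\<exists>P. (\<forall>k. (\<lambda>a. coeff (P a) k) \<in> poly_fun J) \<and> (\<forall>a. f a = poly (P a) (a i))"
  using assms(1)
proof (induction rule: poly_fun.induct)
  case (poly_fun_const c)
  show ?case
    by (rule exI[of _ "\<lambda>_. [:c:]"]) (simp add: poly_fun.poly_fun_const)
next
  case (poly_fun_coord j)
  show ?case
  proof (cases "j = i")
    case True
    show ?thesis
      by (rule exI[of _ "\<lambda>_. [:0, 1:]"]) (simp add: True poly_fun.poly_fun_const)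
  next
    case False
    then have "j \<in> J" using poly_fun_coord by simp
    have "(\<lambda>a. coeff [:a j:] k) \<in> poly_fun J" for k
      by (cases k) (auto intro: poly_fun.intros \<open>j \<in> J\<close>)
    then show ?thesis by (intro exI[of _ "\<lambda>a. [:a j:]"]) simp
  qed
next
  case (poly_fun_add f g)
  then obtain P Q where
    P: "\<And>k. (\<lambda>a. coeff (P a) k) \<in> poly_fun J" "\<And>a. f a = poly (P a) (a i)" and
    Q: "\<And>k. (\<lambda>a. coeff (Q a) k) \<in> poly_fun J" "\<And>a. g a = poly (Q a) (a i)"
    by blast
  show ?case
    by (rule exI[of _ "\<lambda>a. P a + Q a"]) (simp add: P Q poly_fun.poly_fun_add)
next
  case (poly_fun_mult f g)
  then obtain P Q where
    P: "\<And>k. (\<lambda>a. coeff (P a) k) \<in> poly_fun J" "\<And>a. f a = poly (P a) (a i)" and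
    Q: "\<And>k. (\<lambda>a. coeff (Q a) k) \<in> poly_fun J" "\<And>a. g a = poly (Q a) (a i)"
    by blast
  have "(\<lambda>a. coeff (P a * Q a) k) \<in> poly_fun J" for k
    unfolding coeff_mult by (intro poly_fun_sum poly_fun.poly_fun_mult P Q) simp
  then show ?case
    by (intro exI[of _ "\<lambda>a. P a * Q a"]) (simp add: P Q)
qed

lemma (in product_sigma_finite) null_sets_PiM_insertI:
  assumes "finite J" "i \<notin> J" and Z: "Z \<in> sets (PiM (insert i J) M)"
    and null: "AE x in PiM J M. {y \<in> space (M i). x(i := y) \<in> Z} \<in> null_sets (M i)"
  shows "Z \<in> null_sets (PiM (insert i J) M)"
proof -
  have sections: "(\<integral>\<^sup>+ y. indicator Z (x(i := y)) \<partial>M i) = emeasure (M i) {y \<in> space (M i). x(i := y) \<in> Z}"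
    if "x \<in> space (PiM J M)" for x
  proof -
    have "(\<lambda>y. x(i := y)) -` Z \<inter> space (M i) \<in> sets (M i)"
      by (rule measurable_sets[OF measurable_component_update[OF that assms(2)] Z])
    moreover have "(\<lambda>y. x(i := y)) -` Z \<inter> space (M i) = {y \<in> space (M i). x(i := y) \<in> Z}"
      by blast
    ultimately have "{y \<in> space (M i). x(i := y) \<in> Z} \<in> sets (M i)" by simp
    moreover have "(\<integral>\<^sup>+ y. indicator Z (x(i := y)) \<partial>M i) =
        (\<integral>\<^sup>+ y. indicator {y \<in> space (M i). x(i := y) \<in> Z} y \<partial>M i)"
      by (intro nn_integral_cong) (simp add: indicator_def)
    ultimately show ?thesis by simp
  qed
  have "emeasure (PiM (insert i J) M) Z = (\<integral>\<^sup>+ a. indicator Z a \<partial>PiM (insert i J) M)"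
    using Z by simp
  also have "\<dots> = (\<integral>\<^sup>+ x. (\<integral>\<^sup>+ y. indicator Z (x(i := y)) \<partial>M i) \<partial>PiM J M)"
    using assms(1,2) Z by (intro product_nn_integral_insert) auto
  also have "\<dots> = 0"
  proof (rule nn_integral_0_iff_AE[THEN iffD2])
    show "(\<lambda>x. \<integral>\<^sup>+ y. indicator Z (x(i := y)) \<partial>M i) \<in> borel_measurable (PiM J M)"
      using assms(1,2) Z by measurable
    show "AE x in PiM J M. (\<integral>\<^sup>+ y. indicator Z (x(i := y)) \<partial>M i) = 0"
      using AE_space null by eventually_elim (simp add: sections null_setsD1)
  qed
  finally show ?thesis using Z by (simp add: null_sets_def)
qed

lemma poly_fun_zero_set_null:
  assumes "finite I" "f \<in> poly_fun I" "f a0 \<noteq> 0"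
  shows "{a \<in> space (PiM I (\<lambda>_. lborel)). f a = 0} \<in> null_sets (PiM I (\<lambda>_. lborel :: complex measure))"
  using assms
proof (induction I arbitrary: f rule: finite_induct)
  case empty
  have "f a \<noteq> 0" for a
    using poly_fun_cong[OF empty(1), of a a0] empty(2) by simp
  then show ?case by simp
next
  case (insert i J)
  interpret product_sigma_finite "\<lambda>_. lborel :: complex measure"
    by (intro product_sigma_finite.intro sigma_finite_lborel)
  obtain P where P: "\<And>k. (\<lambda>a. coeff (P a) k) \<in> poly_fun J" "\<And>a. f a = poly (P a) (a i)"
    using poly_fun_insert_as_poly[OF insert(4,2)] by blast
  define k where "k = degree (P a0)"
  have "P a0 \<noteq> 0" using insert(5) P(2) by auto
  then have k: "coeff (P a0) k \<noteq> 0" unfolding k_def by simp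
  have P_upd: "P (x(i := y)) = P x" for x y
    by (intro poly_eqI poly_fun_cong[OF P(1)]) (use insert(2) in auto)
  define Z where "Z = {a \<in> space (PiM (insert i J) (\<lambda>_. lborel)). f a = 0}"
  have "AE x in PiM J (\<lambda>_. lborel). coeff (P x) k \<noteq> 0"
    by (rule AE_I'[OF insert.IH[OF P(1) k]]) auto
  then have "AE x in PiM J (\<lambda>_. lborel). {y \<in> space lborel. x(i := y) \<in> Z} \<in> null_sets lborel"
  proof eventually_elim
    case (elim x)
    then have "P x \<noteq> 0" by auto
    moreover have "{y \<in> space lborel. x(i := y) \<in> Z} \<subseteq> {y. poly (P x) y = 0}"
      by (auto simp: Z_def P(2) P_upd)
    ultimately show ?case
      by (intro finite_imp_null_set_lborel finite_subset[OF _ poly_roots_finite])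
  qed
  moreover have "Z \<in> sets (PiM (insert i J) (\<lambda>_. lborel))"
    unfolding Z_def using poly_fun_measurable[OF insert(4)] by measurable
  ultimately show ?case
    unfolding Z_def[symmetric] using insert(1,2) by (intro null_sets_PiM_insertI)
qed

section \<open>Matrices with polynomial entries\<close>

definition poly_fun_mat :: "'i set \<Rightarrow> nat \<Rightarrow> nat \<Rightarrow> (('i \<Rightarrow> complex) \<Rightarrow> complex mat) \<Rightarrow> bool" where
  "poly_fun_mat I n m F \<longleftrightarrow>
     (\<forall>a. F a \<in> carrier_mat n m) \<and> (\<forall>i<n. \<forall>j<m. (\<lambda>a. F a $$ (i, j)) \<in> poly_fun I)"

lemma poly_fun_mat_det:
  assumes "poly_fun_mat I n n F"
  shows "(\<lambda>a. det (F a)) \<in> poly_fun I"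
proof -
  have F: "F a \<in> carrier_mat n n" for a
    using assms unfolding poly_fun_mat_def by auto
  have "(\<lambda>a. \<Sum>p \<in> {p. p permutes {0..<n}}. signof p * (\<Prod>i = 0..<n. F a $$ (i, p i))) \<in> poly_fun I"
  proof (intro poly_fun_sum poly_fun_mult poly_fun_const poly_fun_prod)
    fix p i assume "p \<in> {p. p permutes {0..<n}}" "i \<in> {0..<n}"
    then show "(\<lambda>a. F a $$ (i, p i)) \<in> poly_fun I"
      using assms unfolding poly_fun_mat_def by (auto simp: permutes_in_image)
  qed (simp_all add: finite_permutations)
  then show ?thesis by (simp add: det_def'[OF F])
qed

lemma poly_fun_mat_delete:
  assumes "poly_fun_mat I n n F"
  shows "poly_fun_mat I (n - 1) (n - 1) (\<lambda>a. mat_delete (F a) k l)"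
  unfolding poly_fun_mat_def
proof (intro conjI allI impI)
  have F: "F a \<in> carrier_mat n n" for a
    using assms unfolding poly_fun_mat_def by auto
  show "mat_delete (F a) k l \<in> carrier_mat (n - 1) (n - 1)" for a
    using F[of a] by auto
  fix i j assume "i < n - 1" "j < n - 1"
  then have "(\<lambda>a. F a $$ (if i < k then i else Suc i, if j < l then j else Suc j)) \<in> poly_fun I"
    using assms unfolding poly_fun_mat_def by auto
  moreover have "dim_row (F a) = n" "dim_col (F a) = n" for a
    using F by auto
  ultimately show "(\<lambda>a. mat_delete (F a) k l $$ (i, j)) \<in> poly_fun I"
    using \<open>i < n - 1\<close> \<open>j < n - 1\<close> unfolding mat_delete_def by simp
qed

lemma poly_fun_mat_adj:
  assumes "poly_fun_mat I n n F"
  shows "poly_fun_mat I n n (\<lambda>a. adj_mat (F a))"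
proof -
  have F: "F a \<in> carrier_mat n n" for a
    using assms unfolding poly_fun_mat_def by auto
  have "(\<lambda>a. (-1) ^ (j + i) * det (mat_delete (F a) j i)) \<in> poly_fun I" for i j
    by (intro poly_fun_mult poly_fun_const poly_fun_mat_det[OF poly_fun_mat_delete[OF assms]])
  moreover have "dim_row (F a) = n" "dim_col (F a) = n" for a
    using F by auto
  ultimately show ?thesis
    unfolding poly_fun_mat_def adj_mat_def cofactor_def by simp
qed

lemma poly_fun_mat_submatrix:
  assumes "poly_fun_mat I n m F"
  shows "poly_fun_mat I (card {i. i < n \<and> i \<in> R}) (card {j. j < m \<and> j \<in> C}) (\<lambda>a. submatrix (F a) R C)"
  unfolding poly_fun_mat_def
proof (intro conjI allI impI)
  have F: "F a \<in> carrier_mat n m" for a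
    using assms unfolding poly_fun_mat_def by auto
  show "submatrix (F a) R C \<in> carrier_mat (card {i. i < n \<and> i \<in> R}) (card {j. j < m \<and> j \<in> C})" for a
    using F[of a] by (intro carrier_matI) (auto simp: dim_submatrix)
  fix i j assume i: "i < card {i. i < n \<and> i \<in> R}" and j: "j < card {j. j < m \<and> j \<in> C}"
  then have "pick R i < n" "pick C j < m"
    using pick_le by (simp_all add: conj_commute)
  then have "(\<lambda>a. F a $$ (pick R i, pick C j)) \<in> poly_fun I"
    using assms unfolding poly_fun_mat_def by auto
  moreover have "submatrix (F a) R C $$ (i, j) = F a $$ (pick R i, pick C j)" for a
    using F[of a] i j by (intro submatrix_index) auto
  ultimately show "(\<lambda>a. submatrix (F a) R C $$ (i, j)) \<in> poly_fun I" by simp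
qed

lemma adj_mat_one: "adj_mat (1\<^sub>m n) = (1\<^sub>m n :: 'a :: comm_ring_1 mat)"
proof -
  have "adj_mat (1\<^sub>m n) = 1\<^sub>m n * adj_mat (1\<^sub>m n :: 'a mat)"
    using adj_mat(1)[of "1\<^sub>m n :: 'a mat" n] by simp
  also have "\<dots> = 1 \<cdot>\<^sub>m 1\<^sub>m n"
    using adj_mat(2)[of "1\<^sub>m n :: 'a mat" n] by simp
  also have "\<dots> = 1\<^sub>m n"
    by (rule eq_matI) auto
  finally show ?thesis .
qed

section \<open>Rank bounds and block indexing\<close>

lemma block_index_less: "k < n \<Longrightarrow> c < m \<Longrightarrow> k * m + c < n * (m :: nat)"
proof -
  assume "k < n" "c < m"
  then have "k * m + c < (k + 1) * m" by simp
  also have "\<dots> \<le> n * m" using \<open>k < n\<close> by (intro mult_right_mono) auto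
  finally show ?thesis .
qed

lemma sum_blocks: "(\<Sum>j<n * m. f j) = (\<Sum>k<n. \<Sum>c<m. f (k * m + c))"
  for f :: "nat \<Rightarrow> 'b :: comm_monoid_add"
proof -
  have "sum f {k * m..<k * m + m} = (\<Sum>c<m. f (k * m + c))" for k
    using sum.shift_bounds_nat_ivl[of f 0 "k * m" m] by (simp add: add.commute atLeast0LessThan)
  then show ?thesis
    using sum.nat_group[of f m n] by simp
qed

lemma sum_block_delta:
  fixes k m x :: nat
  assumes "0 < m"
  shows "(\<Sum>c<m. if k * m + c = x then X else 0) = (if x div m = k then X else 0)"
proof -
  have "k * m + c = x \<longleftrightarrow> x div m = k \<and> c = x mod m" if "c < m" for c
  proof
    assume "k * m + c = x"
    then show "x div m = k \<and> c = x mod m" using that by auto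
  next
    assume "x div m = k \<and> c = x mod m"
    then show "k * m + c = x" by (metis div_mult_mod_eq mult.commute)
  qed
  then have "(\<Sum>c<m. if k * m + c = x then X else 0) = (\<Sum>c<m. if x div m = k \<and> c = x mod m then X else 0)"
    by (intro sum.cong) auto
  also have "\<dots> = (if x div m = k then X else 0)"
    using assms by (cases "x div m = k") (simp_all add: sum.delta')
  finally show ?thesis .
qed

lemma card_less_mult_mod_less:
  assumes "r \<le> m"
  shows "card {i. i < q * m \<and> i mod m < r} = q * r"
proof -
  have "{i. i < q * m \<and> i mod m < r} = (\<lambda>(k, c). k * m + c) ` ({..<q} \<times> {..<r})"
  proof (rule Set.set_eqI, rule iffI)
    fix i assume "i \<in> {i. i < q * m \<and> i mod m < r}"
    then show "i \<in> (\<lambda>(k, c). k * m + c) ` ({..<q} \<times> {..<r})"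
      by (intro image_eqI[of _ _ "(i div m, i mod m)"]) (auto intro: less_mult_imp_div_less)
  next
    fix i assume "i \<in> (\<lambda>(k, c). k * m + c) ` ({..<q} \<times> {..<r})"
    then show "i \<in> {i. i < q * m \<and> i mod m < r}"
      using assms by (auto intro: block_index_less)
  qed
  moreover have "inj_on (\<lambda>(k, c). k * m + c) ({..<q} \<times> {..<r})"
  proof (rule inj_onI, clarsimp)
    fix k c k' c' assume "c < r" "c' < r" "k * m + c = k' * m + c'"
    with assms have "(k * m + c) div m = (k' * m + c') div m" "(k * m + c) mod m = (k' * m + c') mod m"
      by simp_all
    with \<open>c < r\<close> \<open>c' < r\<close> assms show "k = k' \<and> c = c'" by simp
  qed
  ultimately show ?thesis
    by (simp add: card_image card_cartesian_product)
qed

lemma pick_image_strict_mono_on: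
  assumes "strict_mono_on I \<sigma>" and m: "m < card I"
  shows "pick (\<sigma> ` I) m = \<sigma> (pick I m)"
proof -
  define x where "x = pick I m"
  have x: "x \<in> I" "card {a \<in> I. a < x} = m"
    unfolding x_def using pick_in_set_le[OF m] card_pick_le[OF m] by auto
  have "{a \<in> \<sigma> ` I. a < \<sigma> x} = \<sigma> ` {a \<in> I. a < x}"
    using assms(1) x(1) by (auto simp: strict_mono_on_less)
  then have "card {a \<in> \<sigma> ` I. a < \<sigma> x} = m"
    using x(2) strict_mono_on_imp_inj_on[OF assms(1)] by (simp add: card_image inj_on_subset)
  then show ?thesis
    using pick_card_in_set[of "\<sigma> x" "\<sigma> ` I"] x(1) unfolding x_def by auto
qed

lemma (in vec_space) rank_le_if_cols_in_col_space:
  assumes A: "A \<in> carrier_mat n na" and B: "B \<in> carrier_mat n nb"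
    and cols: "\<And>j. j < nb \<Longrightarrow> \<exists>y \<in> carrier_vec na. col B j = A *\<^sub>v y"
  shows "rank B \<le> rank A"
proof -
  define W where "W = span (set (cols A))"
  have "set (cols B) \<subseteq> W"
  proof
    fix v assume "v \<in> set (cols B)"
    then obtain j where j: "j < nb" "v = col B j" using B by (auto simp: in_set_conv_nth)
    then obtain y where "y \<in> carrier_vec na" "v = A *\<^sub>v y" using cols by blast
    then show "v \<in> W" using col_space_eq[OF A] A unfolding W_def col_space_def by auto
  qed
  moreover have W: "subspace class_ring W V"
    unfolding W_def using span_is_subspace A cols_dim carrier_matD by auto
  ultimately have "span (set (cols B)) \<subseteq> W"
    by (simp add: span_is_subset subspace_def)
  moreover have "subspace class_ring (span (set (cols B))) V"
    using span_is_subspace B cols_dim carrier_matD by auto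
  ultimately have "subspace class_ring (span (set (cols B))) (vs W)"
    using nested_subspaces[OF W] by auto
  moreover have "vectorspace.fin_dim class_ring (vs W)"
    unfolding W_def using A fin_dim_span_cols by auto
  moreover have "vectorspace.fin_dim class_ring (span_vs (set (cols B)))"
    using B fin_dim_span_cols by blast
  ultimately show ?thesis
    unfolding rank_def W_def using vectorspace.subspace_dim[OF subspace_is_vs[OF W]] W_def by auto
qed

lemma (in vec_space) rank_le_nr:
  assumes "B \<in> carrier_mat n nb"
  shows "rank B \<le> n"
proof -
  have "rank B \<le> rank (1\<^sub>m n)"
    by (rule rank_le_if_cols_in_col_space[OF one_carrier_mat assms]) (use assms in auto)
  also have "\<dots> \<le> n" by (rule rank_le_nc[OF one_carrier_mat])
  finally show ?thesis .
qed

lemma (in vec_space) rank_le_if_block_col_sums_zero: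
  assumes T: "T \<in> carrier_mat n (Suc m * b)"
    and sums: "\<And>i t. i < n \<Longrightarrow> t < b \<Longrightarrow> (\<Sum>k<Suc m. T $$ (i, k * b + t)) = 0"
  shows "rank T \<le> m * b"
proof -
  define B where "B = mat n (m * b) (\<lambda>(i, j). T $$ (i, j))"
  have B: "B \<in> carrier_mat n (m * b)" unfolding B_def by simp
  have "rank T \<le> rank B"
  proof (rule rank_le_if_cols_in_col_space[OF B T])
    fix j assume j: "j < Suc m * b"
    show "\<exists>y \<in> carrier_vec (m * b). col T j = B *\<^sub>v y"
    proof (cases "j < m * b")
      case True
      have "col T j = B *\<^sub>v unit_vec (m * b) j"
        using True T B by (intro eq_vecI) (auto simp: B_def)
      then show ?thesis by auto
    next
      case False
      define t where "t = j - m * b"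
      have t: "t < b" and j_eq: "j = m * b + t"
        using j False unfolding t_def by auto
      define y where "y = vec (m * b) (\<lambda>j'. if j' mod b = t then - 1 else (0 :: 'a))"
      have "col T j = B *\<^sub>v y"
      proof (rule eq_vecI)
        fix i assume "i < dim_vec (B *\<^sub>v y)"
        then have i: "i < n" using B by simp
        have "(B *\<^sub>v y) $ i = (\<Sum>j'<m * b. B $$ (i, j') * y $ j')"
          using i B by (simp add: scalar_prod_def y_def atLeast0LessThan)
        also have "\<dots> = (\<Sum>k<m. \<Sum>s<b. B $$ (i, k * b + s) * y $ (k * b + s))"
          by (rule sum_blocks)
        also have "\<dots> = (\<Sum>k<m. - T $$ (i, k * b + t))"
          using i t block_index_less[of _ m _ b] by (simp add: B_def y_def if_distrib sum.delta' cong: if_cong)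
        also have "\<dots> = T $$ (i, m * b + t)"
          using sums[OF i t] by (simp add: sum_negf neg_eq_iff_add_eq_0 add.commute)
        finally show "col T j $ i = (B *\<^sub>v y) $ i"
          using i j T j_eq by simp
      qed (use B T in simp)
      moreover have "y \<in> carrier_vec (m * b)" unfolding y_def by simp
      ultimately show ?thesis by blast
    qed
  qed
  also have "\<dots> \<le> m * b" by (rule rank_le_nc[OF B])
  finally show ?thesis .
qed

section \<open>The block matrices of the theorem\<close>

locale block_dims =
  fixes K N M :: nat
  assumes K_ge_2: "K \<ge> 2" and M_pos: "0 < M" and N_less_KM: "N < K * M"
begin

definition r :: nat where "r = K * M - N"

definition entries :: "(nat \<times> nat \<times> nat) set" where
  "entries = {..<K} \<times> {..<N} \<times> {..<M}"

abbreviation A :: "(nat \<times> nat \<times> nat \<Rightarrow> complex) \<Rightarrow> complex mat" where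
  "A a \<equiv> Amat K N M a"

lemma r_pos: "0 < r"
  using N_less_KM unfolding r_def by simp

lemma N_plus_r: "N + r = K * M"
  using N_less_KM unfolding r_def by simp

lemma A_carrier: "A a \<in> carrier_mat N (K * M)"
  unfolding Amat_def by simp

lemma A_index: "i < N \<Longrightarrow> j < K * M \<Longrightarrow> A a $$ (i, j) = a (j div M, i, j mod M)"
  unfolding Amat_def Ablock_def using M_pos by simp

lemma A_index_block: "i < N \<Longrightarrow> k < K \<Longrightarrow> c < M \<Longrightarrow> A a $$ (i, k * M + c) = a (k, i, c)"
  using A_index[of i "k * M + c"] block_index_less M_pos by simp

lemma A_entry_poly_fun: "i < N \<Longrightarrow> j < K * M \<Longrightarrow> (\<lambda>a. A a $$ (i, j)) \<in> poly_fun entries"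
  using A_index[of i j] M_pos
  by (auto simp: entries_def div_less_iff_less_mult mult.commute intro: poly_fun_coord)

definition lead_block :: "(nat \<times> nat \<times> nat \<Rightarrow> complex) \<Rightarrow> complex mat" where
  "lead_block a = mat N N (\<lambda>(i, j). A a $$ (i, j))"

text \<open>Cramer's rule: if L is the leading N \<times> N block of A and c is column N + t of A, then
  L (adj L c) = det L c, so this vector lies in null(A). Using adj L rather than the inverse of L
  keeps its entries polynomial in the entries of A.\<close>
definition kernel_vec :: "(nat \<times> nat \<times> nat \<Rightarrow> complex) \<Rightarrow> nat \<Rightarrow> complex vec" where
  "kernel_vec a t = vec (K * M) (\<lambda>c.
     if c < N then - (adj_mat (lead_block a) *\<^sub>v col (A a) (N + t)) $ c
     else if c = N + t then det (lead_block a) else 0)"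

definition kernel_mat :: "(nat \<times> nat \<times> nat \<Rightarrow> complex) \<Rightarrow> complex mat" where
  "kernel_mat a = mat (K * M) r (\<lambda>(c, t). kernel_vec a t $ c)"

lemma lead_block_carrier: "lead_block a \<in> carrier_mat N N"
  unfolding lead_block_def by simp

lemma lead_block_poly_fun: "poly_fun_mat entries N N lead_block"
  unfolding poly_fun_mat_def lead_block_def using N_less_KM by (auto intro: A_entry_poly_fun)

lemma kernel_mat_carrier: "kernel_mat a \<in> carrier_mat (K * M) r"
  unfolding kernel_mat_def by simp

lemma kernel_mat_index: "c < K * M \<Longrightarrow> t < r \<Longrightarrow> kernel_mat a $$ (c, t) = kernel_vec a t $ c"
  unfolding kernel_mat_def by simp

lemma col_kernel_mat: "t < r \<Longrightarrow> col (kernel_mat a) t = kernel_vec a t"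
  unfolding kernel_mat_def kernel_vec_def by (intro eq_vecI) auto

lemma kernel_vec_index:
  "c < K * M \<Longrightarrow> kernel_vec a t $ c =
     (if c < N then - (adj_mat (lead_block a) *\<^sub>v col (A a) (N + t)) $ c
      else if c = N + t then det (lead_block a) else 0)"
  unfolding kernel_vec_def by (rule index_vec)

lemma kernel_vec_in_kernel:
  assumes t: "t < r"
  shows "A a *\<^sub>v kernel_vec a t = 0\<^sub>v N"
proof (rule eq_vecI)
  fix i assume "i < dim_vec (0\<^sub>v N)"
  then have i: "i < N" by simp
  let ?L = "lead_block a" and ?w = "col (A a) (N + t)" and ?v = "kernel_vec a t"
  have Nt: "N + t < K * M" using t N_plus_r by simp
  have w: "?w \<in> carrier_vec N" using col_carrier_vec[OF Nt A_carrier] .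
  have adj: "adj_mat ?L \<in> carrier_mat N N" using adj_mat(1)[OF lead_block_carrier] .
  have "(A a *\<^sub>v ?v) $ i = (\<Sum>c\<in>{0..<K * M}. A a $$ (i, c) * ?v $ c)"
    using i A_carrier[of a] by (simp add: scalar_prod_def kernel_vec_def)
  also have "\<dots> = (\<Sum>c\<in>{0..<N}. A a $$ (i, c) * ?v $ c) + (\<Sum>c\<in>{N..<K * M}. A a $$ (i, c) * ?v $ c)"
    using N_less_KM by (intro sum.atLeastLessThan_concat[symmetric]) auto
  also have "(\<Sum>c\<in>{N..<K * M}. A a $$ (i, c) * ?v $ c) =
      (\<Sum>c\<in>{N..<K * M}. if c = N + t then A a $$ (i, N + t) * det ?L else 0)"
    by (rule sum.cong) (auto simp: kernel_vec_index)
  also have "\<dots> = A a $$ (i, N + t) * det ?L"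
    using Nt by simp
  also have "(\<Sum>c\<in>{0..<N}. A a $$ (i, c) * ?v $ c) = - (\<Sum>c\<in>{0..<N}. ?L $$ (i, c) * (adj_mat ?L *\<^sub>v ?w) $ c)"
    unfolding sum_negf[symmetric]
    by (rule sum.cong) (use i N_less_KM in \<open>auto simp: kernel_vec_index lead_block_def\<close>)
  also have "(\<Sum>c\<in>{0..<N}. ?L $$ (i, c) * (adj_mat ?L *\<^sub>v ?w) $ c) = (?L *\<^sub>v (adj_mat ?L *\<^sub>v ?w)) $ i"
    using i adj lead_block_carrier[of a] by (simp add: scalar_prod_def)
  also have "?L *\<^sub>v (adj_mat ?L *\<^sub>v ?w) = (?L * adj_mat ?L) *\<^sub>v ?w"
    using adj lead_block_carrier[of a] w by simp
  also have "((?L * adj_mat ?L) *\<^sub>v ?w) $ i = det ?L * A a $$ (i, N + t)"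
    unfolding adj_mat(2)[OF lead_block_carrier] using i w Nt A_carrier[of a] by simp
  finally show "(A a *\<^sub>v ?v) $ i = 0\<^sub>v N $ i"
    using i by simp
qed (use A_carrier[of a] in simp)

lemma kernel_vec_poly_fun:
  assumes c: "c < K * M" and t: "t < r"
  shows "(\<lambda>a. kernel_vec a t $ c) \<in> poly_fun entries"
proof -
  have Nt: "N + t < K * M" using t N_plus_r by simp
  consider "c < N" | "c = N + t" | "\<not> c < N" "c \<noteq> N + t" by blast
  then show ?thesis
  proof cases
    case 1
    have "kernel_vec a t $ c = - (\<Sum>l<N. adj_mat (lead_block a) $$ (c, l) * A a $$ (l, N + t))" for a
      using 1 c Nt adj_mat(1)[OF lead_block_carrier, of a] A_carrier[of a]
      by (simp add: kernel_vec_def scalar_prod_def atLeast0LessThan)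
    moreover have "(\<lambda>a. - (\<Sum>l<N. adj_mat (lead_block a) $$ (c, l) * A a $$ (l, N + t))) \<in> poly_fun entries"
      using poly_fun_mat_adj[OF lead_block_poly_fun] 1 Nt unfolding poly_fun_mat_def
      by (intro poly_fun_uminus poly_fun_sum poly_fun_mult A_entry_poly_fun) auto
    ultimately show ?thesis by simp
  next
    case 2
    then show ?thesis
      using c poly_fun_mat_det[OF lead_block_poly_fun] by (simp add: kernel_vec_def)
  next
    case 3
    then show ?thesis
      using c poly_fun_const[of 0] by (simp add: kernel_vec_def)
  qed
qed

lemma Atilde_carrier: "Atilde K N M a U \<in> carrier_mat N (K * r)"
  unfolding Atilde_def Let_def r_def[symmetric] by simp

lemma Atilde_index:
  assumes U: "U \<in> carrier_mat (K * M) r" and i: "i < N" and k: "k < K" and t: "t < r"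
  shows "Atilde K N M a U $$ (i, k * r + t) = (\<Sum>c<M. A a $$ (i, k * M + c) * U $$ (k * M + c, t))"
proof -
  have "Atilde K N M a U $$ (i, k * r + t) = (Ablock N M a k * Ublock M U k) $$ (i, t)"
    using block_index_less[OF k t] i t
    unfolding Atilde_def Let_def r_def[symmetric] by simp
  also have "\<dots> = (\<Sum>c\<in>{0..<M}. Ablock N M a k $$ (i, c) * Ublock M U k $$ (c, t))"
    using i t U unfolding Ablock_def Ublock_def by (simp add: scalar_prod_def)
  also have "\<dots> = (\<Sum>c<M. A a $$ (i, k * M + c) * U $$ (k * M + c, t))"
    using i t U k by (intro sum.cong) (auto simp: Ablock_def Ublock_def A_index_block)
  finally show ?thesis .
qed

text \<open>Column k r + t of \<open>Atilde\<close> is A_k applied to block k of column t of U, hence linear in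
  that column of U.\<close>
lemma col_Atilde_eq_mult:
  assumes U: "U \<in> carrier_mat (K * M) r" and V: "V \<in> carrier_mat (K * M) r"
    and x: "x \<in> carrier_vec r" "col V t = U *\<^sub>v x" and k: "k < K" and t: "t < r"
  shows "col (Atilde K N M a V) (k * r + t) =
    Atilde K N M a U *\<^sub>v vec (K * r) (\<lambda>j. if j div r = k then x $ (j mod r) else 0)"
    (is "_ = _ *\<^sub>v ?y")
proof (rule eq_vecI)
  let ?T = "Atilde K N M a U"
  fix i assume "i < dim_vec (?T *\<^sub>v ?y)"
  then have i: "i < N" using Atilde_carrier[of a U] by simp
  have V_entry: "V $$ (k * M + c, t) = (\<Sum>s<r. U $$ (k * M + c, s) * x $ s)" if "c < M" for c
  proof -
    have "V $$ (k * M + c, t) = col V t $ (k * M + c)"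
      using V t block_index_less[OF k that] by simp
    also have "\<dots> = (U *\<^sub>v x) $ (k * M + c)"
      by (simp only: x(2))
    finally have "V $$ (k * M + c, t) = (U *\<^sub>v x) $ (k * M + c)" .
    then show ?thesis
      using U x(1) block_index_less[OF k that] by (simp add: scalar_prod_def atLeast0LessThan)
  qed
  have "(?T *\<^sub>v ?y) $ i = (\<Sum>j<K * r. ?T $$ (i, j) * ?y $ j)"
    using i Atilde_carrier[of a U] by (simp add: scalar_prod_def atLeast0LessThan)
  also have "\<dots> = (\<Sum>k'<K. \<Sum>s<r. ?T $$ (i, k' * r + s) * ?y $ (k' * r + s))"
    by (rule sum_blocks)
  also have "\<dots> = (\<Sum>k'<K. if k' = k then \<Sum>s<r. ?T $$ (i, k * r + s) * x $ s else 0)"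
    using block_index_less r_pos by (intro sum.cong refl) auto
  also have "\<dots> = (\<Sum>s<r. \<Sum>c<M. A a $$ (i, k * M + c) * U $$ (k * M + c, s) * x $ s)"
    using k by (simp add: Atilde_index[OF U i k] sum_distrib_right)
  also have "\<dots> = (\<Sum>c<M. A a $$ (i, k * M + c) * V $$ (k * M + c, t))"
    by (subst sum.swap) (simp add: V_entry sum_distrib_left mult.assoc)
  also have "\<dots> = col (Atilde K N M a V) (k * r + t) $ i"
    using i Atilde_carrier[of a V] block_index_less[OF k t] by (simp add: Atilde_index[OF V i k t])
  finally show "col (Atilde K N M a V) (k * r + t) $ i = (?T *\<^sub>v ?y) $ i" ..
qed (use Atilde_carrier[of a V] Atilde_carrier[of a U] in simp)

lemma rank_Atilde_le_if_cols_in_col_space: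
  assumes U: "U \<in> carrier_mat (K * M) r" and V: "V \<in> carrier_mat (K * M) r"
    and cols: "\<And>t. t < r \<Longrightarrow> \<exists>x \<in> carrier_vec r. col V t = U *\<^sub>v x"
  shows "vec_space.rank N (Atilde K N M a V) \<le> vec_space.rank N (Atilde K N M a U)"
proof (rule vec_space.rank_le_if_cols_in_col_space[OF Atilde_carrier Atilde_carrier])
  fix j assume j: "j < K * r"
  then have k: "j div r < K" and t: "j mod r < r"
    using r_pos by (auto simp: div_less_iff_less_mult)
  obtain x where "x \<in> carrier_vec r" "col V (j mod r) = U *\<^sub>v x"
    using cols[OF t] by blast
  from col_Atilde_eq_mult[OF U V this k t] show "\<exists>y \<in> carrier_vec (K * r). col (Atilde K N M a V) j = Atilde K N M a U *\<^sub>v y"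
    by (intro bexI[of _ "vec (K * r) _"]) (auto simp: mult.commute[of r])
qed

lemma null_basis_carrier: "null_basis_mat (A a) U r \<Longrightarrow> U \<in> carrier_mat (K * M) r"
  unfolding null_basis_mat_def using A_carrier[of a] by simp

lemma null_basis_span:
  assumes nb: "null_basis_mat (A a) U r"
  shows "vec_space.col_space (K * M) U = mat_kernel (A a)"
  using nb A_carrier[of a] unfolding null_basis_mat_def vec_space.col_space_def by simp

lemma kernel_in_col_space_null_basis:
  assumes nb: "null_basis_mat (A a) U r" and v: "v \<in> mat_kernel (A a)"
  shows "\<exists>x \<in> carrier_vec r. v = U *\<^sub>v x"
proof -
  have "v \<in> {y \<in> carrier_vec (K * M). \<exists>x \<in> carrier_vec r. U *\<^sub>v x = y}"
    using v null_basis_span[OF nb] vec_space.col_space_eq[OF null_basis_carrier[OF nb]]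
      carrier_matD[OF null_basis_carrier[OF nb]] by simp
  then show ?thesis by auto
qed

lemma null_basis_col_in_kernel:
  assumes nb: "null_basis_mat (A a) U r" and t: "t < r"
  shows "A a *\<^sub>v col U t = 0\<^sub>v N"
proof -
  interpret V: vec_space "TYPE(complex)" "K * M" .
  have U: "U \<in> carrier_mat (K * M) r" by (rule null_basis_carrier[OF nb])
  have "set (cols U) \<subseteq> carrier_vec (K * M)" "col U t \<in> set (cols U)"
    using U t by (auto simp: cols_def)
  then have "col U t \<in> V.span (set (cols U))"
    using V.in_own_span by blast
  then show ?thesis
    using null_basis_span[OF nb] A_carrier[of a] unfolding V.col_space_def mat_kernel_def by auto
qed

lemma rank_Atilde_kernel_mat_le:
  assumes nb: "null_basis_mat (A a) U r"
  shows "vec_space.rank N (Atilde K N M a (kernel_mat a)) \<le> vec_space.rank N (Atilde K N M a U)"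
proof (rule rank_Atilde_le_if_cols_in_col_space[OF null_basis_carrier[OF nb] kernel_mat_carrier])
  fix t assume "t < r"
  then have "col (kernel_mat a) t \<in> mat_kernel (A a)"
    using kernel_vec_in_kernel A_carrier[of a] col_kernel_mat
    unfolding mat_kernel_def kernel_vec_def by auto
  then show "\<exists>x \<in> carrier_vec r. col (kernel_mat a) t = U *\<^sub>v x"
    by (rule kernel_in_col_space_null_basis[OF nb])
qed

lemma Atilde_block_col_sum_zero:
  assumes nb: "null_basis_mat (A a) U r" and i: "i < N" and t: "t < r"
  shows "(\<Sum>k<K. Atilde K N M a U $$ (i, k * r + t)) = 0"
proof -
  have U: "U \<in> carrier_mat (K * M) r" by (rule null_basis_carrier[OF nb])
  have "(\<Sum>k<K. Atilde K N M a U $$ (i, k * r + t)) = (\<Sum>k<K. \<Sum>c<M. A a $$ (i, k * M + c) * U $$ (k * M + c, t))"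
    using Atilde_index[OF U i _ t] by simp
  also have "\<dots> = (\<Sum>c<K * M. A a $$ (i, c) * U $$ (c, t))"
    by (rule sum_blocks[symmetric])
  also have "\<dots> = (A a *\<^sub>v col U t) $ i"
    using i t U A_carrier[of a] by (simp add: scalar_prod_def atLeast0LessThan)
  also have "\<dots> = 0"
    using null_basis_col_in_kernel[OF nb t] i by simp
  finally show ?thesis .
qed

lemma rank_Atilde_le:
  assumes nb: "null_basis_mat (A a) U r"
  shows "vec_space.rank N (Atilde K N M a U) \<le> min ((K - 1) * r) N"
proof -
  have K: "Suc (K - 1) = K" using K_ge_2 by simp
  have "vec_space.rank N (Atilde K N M a U) \<le> (K - 1) * r"
  proof (rule vec_space.rank_le_if_block_col_sums_zero)
    show "Atilde K N M a U \<in> carrier_mat N (Suc (K - 1) * r)"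
      unfolding K by (rule Atilde_carrier)
    show "(\<Sum>k<Suc (K - 1). Atilde K N M a U $$ (i, k * r + t)) = 0" if "i < N" "t < r" for i t
      unfolding K using nb that by (rule Atilde_block_col_sum_zero)
  qed
  then show ?thesis
    using vec_space.rank_le_nr[OF Atilde_carrier] by simp
qed

subsection \<open>A minor that does not vanish identically\<close>

abbreviation Atilde_ker :: "(nat \<times> nat \<times> nat \<Rightarrow> complex) \<Rightarrow> complex mat" where
  "Atilde_ker a \<equiv> Atilde K N M a (kernel_mat a)"

lemma Atilde_ker_poly_fun: "poly_fun_mat entries N (K * r) Atilde_ker"
  unfolding poly_fun_mat_def
proof (intro conjI allI impI)
  fix i j assume i: "i < N" and j: "j < K * r"
  define k t where "k = j div r" and "t = j mod r"
  have k: "k < K" and t: "t < r" and j_eq: "j = k * r + t"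
    using j r_pos unfolding k_def t_def by (auto simp: div_less_iff_less_mult)
  have "(\<lambda>a. \<Sum>c<M. A a $$ (i, k * M + c) * kernel_vec a t $ (k * M + c)) \<in> poly_fun entries"
    using i t block_index_less[OF k]
    by (intro poly_fun_sum poly_fun_mult A_entry_poly_fun kernel_vec_poly_fun) auto
  moreover have "kernel_mat a $$ (k * M + c, t) = kernel_vec a t $ (k * M + c)" if "c < M" for a c
    using block_index_less[OF k that] t by (rule kernel_mat_index)
  ultimately show "(\<lambda>a. Atilde_ker a $$ (i, j)) \<in> poly_fun entries"
    unfolding j_eq using Atilde_index[OF kernel_mat_carrier i k t] by simp
qed (rule Atilde_carrier)

definition q :: nat where "q = N div M"
definition s :: nat where "s = N mod M"

text \<open>Grouped by i div M, the N rows of A form q full blocks of M rows and a last block of s rows.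
  The slot of a row is its position in its block, shifted to the end of [0, M) in the last block.\<close>
definition row_slot :: "nat \<Rightarrow> nat" where
  "row_slot i = (if i div M < q then i mod M else M - s + i mod M)"

text \<open>At the witness A = [I | B], where row i of B has a single 1, in column N + row_slot i.
  Then the leading block is the identity, column t of the kernel matrix is e_(N+t) minus
  column N + t of A (in the first N entries), and the minor of \<open>Atilde_ker\<close> chosen below is -I.\<close>
definition witness :: "nat \<times> nat \<times> nat \<Rightarrow> complex" where
  "witness = (\<lambda>(k, i, j). if k * M + j < N then (if i = k * M + j then 1 else 0)
                         else (if row_slot i = k * M + j - N then 1 else 0))"

lemma A_witness_index:
  "i < N \<Longrightarrow> c < K * M \<Longrightarrow>
    A witness $$ (i, c) = (if c < N then (if i = c then 1 else 0) else (if row_slot i = c - N then 1 else 0))"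
  using A_index[of i c] by (simp add: witness_def)

lemma lead_block_witness: "lead_block witness = 1\<^sub>m N"
  by (rule eq_matI) (auto simp: lead_block_def A_witness_index less_trans[OF _ N_less_KM])

lemma kernel_vec_witness_index:
  assumes c: "c < K * M" and t: "t < r"
  shows "kernel_vec witness t $ c =
    (if c < N then (if row_slot c = t then -1 else 0) else if c = N + t then 1 else 0)"
proof (cases "c < N")
  case True
  have Nt: "N + t < K * M" using t N_plus_r by simp
  have "(1\<^sub>m N *\<^sub>v col (A witness) (N + t)) $ c = A witness $$ (c, N + t)"
    using True Nt col_carrier_vec[OF Nt A_carrier] A_carrier[of witness] by simp
  then show ?thesis
    using True c Nt by (simp add: kernel_vec_index lead_block_witness adj_mat_one A_witness_index)
qed (use c in \<open>simp add: kernel_vec_index lead_block_witness\<close>)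

lemma Atilde_ker_witness_index:
  assumes i: "i < N" and k: "k < K" and t: "t < r"
  shows "Atilde_ker witness $$ (i, k * r + t) =
    (if row_slot i = t then (if (N + t) div M = k then 1 else 0) - (if i div M = k then 1 else 0) else 0)"
proof -
  have "Atilde_ker witness $$ (i, k * r + t) =
      (\<Sum>c<M. A witness $$ (i, k * M + c) * kernel_vec witness t $ (k * M + c))"
    using block_index_less[OF k] t
    by (simp add: Atilde_index[OF kernel_mat_carrier i k t] kernel_mat_index)
  also have "\<dots> = (\<Sum>c<M. (if k * M + c = i then (if row_slot i = t then -1 else 0) else 0)
                        + (if k * M + c = N + t then (if row_slot i = t then 1 else 0) else 0))"
    using i t block_index_less[OF k]
    by (intro sum.cong refl) (auto simp: A_witness_index kernel_vec_witness_index)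
  finally show ?thesis
    by (auto simp: sum.distrib sum_block_delta[OF M_pos])
qed

lemma q_less_K: "q < K"
  unfolding q_def using N_less_KM M_pos by (simp add: div_less_iff_less_mult)

lemma N_eq: "N = q * M + s"
  unfolding q_def s_def by simp

lemma block_le_q: "i < N \<Longrightarrow> i div M \<le> q"
  unfolding q_def by (simp add: div_le_mono)

lemma last_block: "i < N \<Longrightarrow> \<not> i div M < q \<Longrightarrow> i div M = q \<and> i mod M < s"
  using block_le_q[of i] N_eq div_mult_mod_eq[of i M] by (metis add_less_cancel_left le_less)

lemma row_slot_less_M: "i < N \<Longrightarrow> row_slot i < M"
  using last_block[of i] M_pos unfolding row_slot_def s_def by auto

lemma block_of_slot_ne: "i < N \<Longrightarrow> (N + row_slot i) div M \<noteq> i div M"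
proof (cases "i div M < q")
  case True
  have "N div M \<le> (N + row_slot i) div M" by (simp add: div_le_mono)
  then show ?thesis using True unfolding q_def by simp
next
  case False
  assume i: "i < N"
  then have "i div M = q" "i mod M < s" using last_block False by auto
  moreover have "s < M" unfolding s_def using M_pos by simp
  ultimately have "N + row_slot i = i mod M + Suc q * M"
    using False N_eq unfolding row_slot_def by simp
  moreover have "(i mod M + Suc q * M) div M = Suc q"
    using M_pos by (subst div_mult_self1) simp_all
  ultimately have "(N + row_slot i) div M = Suc q" by simp
  then show ?thesis using \<open>i div M = q\<close> by simp
qed

lemma row_slot_inj_on_block:
  assumes "i div M = i' div M" and "row_slot i = row_slot i'"
  shows "i = i'"
proof -
  have "i mod M = i' mod M"
    using assms unfolding row_slot_def by (cases "i div M < q") auto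
  then show ?thesis
    using assms(1) by (metis div_mult_mod_eq)
qed

definition minor_rows :: "nat set" where
  "minor_rows = {i. i < N \<and> row_slot i < r}"

definition minor_col :: "nat \<Rightarrow> nat" where
  "minor_col i = (i div M) * r + row_slot i"

definition minor_cols :: "nat set" where
  "minor_cols = minor_col ` minor_rows"

lemma minor_col_strict_mono: "strict_mono_on minor_rows minor_col"
proof (rule strict_mono_onI)
  fix i i' assume i: "i \<in> minor_rows" and i': "i' \<in> minor_rows" and "i < i'"
  then have slots: "row_slot i < r" "row_slot i' < r" and "i div M \<le> i' div M"
    unfolding minor_rows_def by (auto simp: div_le_mono)
  show "minor_col i < minor_col i'"
  proof (cases "i div M = i' div M")
    case True
    then have "i mod M < i' mod M"
      using \<open>i < i'\<close> by (metis div_mult_mod_eq add_less_cancel_left not_less_iff_gr_or_eq)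
    then have "row_slot i < row_slot i'" unfolding row_slot_def using True by auto
    then show ?thesis unfolding minor_col_def using True by simp
  next
    case False
    then have "Suc (i div M) \<le> i' div M" using \<open>i div M \<le> i' div M\<close> by simp
    have "minor_col i < Suc (i div M) * r" unfolding minor_col_def using slots by simp
    also have "\<dots> \<le> (i' div M) * r" using \<open>Suc (i div M) \<le> i' div M\<close> by (rule mult_right_mono) simp
    also have "\<dots> \<le> minor_col i'" unfolding minor_col_def by simp
    finally show ?thesis .
  qed
qed

lemma minor_col_less: "i \<in> minor_rows \<Longrightarrow> minor_col i < K * r"
  using block_le_q[of i] q_less_K unfolding minor_rows_def minor_col_def
  by (auto intro: block_index_less)

lemma Atilde_ker_witness_minor_col:
  assumes "i \<in> minor_rows" and "i' \<in> minor_rows"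
  shows "Atilde_ker witness $$ (i, minor_col i') = (if i = i' then -1 else 0)"
proof -
  have "i < N" "i' < N" "row_slot i' < r" "i' div M < K"
    using assms block_le_q[of i'] q_less_K unfolding minor_rows_def by auto
  then show ?thesis
    unfolding minor_col_def Atilde_ker_witness_index[OF \<open>i < N\<close> \<open>i' div M < K\<close> \<open>row_slot i' < r\<close>]
    using block_of_slot_ne[OF \<open>i' < N\<close>] row_slot_inj_on_block[of i i'] by auto
qed

lemma card_minor_rows: "card minor_rows = min ((K - 1) * r) N"
proof (cases "(K - 1) * M \<le> N")
  case True
  have KM: "K * M = (K - 1) * M + M"
    using K_ge_2 by (metis Suc_diff_1 add.commute less_le_trans mult_Suc pos2)
  have "K - 1 \<le> q"
    unfolding q_def using True M_pos by (metis div_le_mono nonzero_mult_div_cancel_right not_gr0)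
  then have q: "q = K - 1" using q_less_K by simp
  then have r: "r = M - s"
    unfolding r_def using N_eq KM by simp
  have "minor_rows = {i. i < (K - 1) * M \<and> i mod M < r}"
  proof (rule Set.set_eqI, rule iffI)
    fix i assume "i \<in> minor_rows"
    then have "i < N" "row_slot i < r" unfolding minor_rows_def by auto
    then have "i div M < q" unfolding row_slot_def r by (auto split: if_splits)
    then show "i \<in> {i. i < (K - 1) * M \<and> i mod M < r}"
      using \<open>row_slot i < r\<close> q M_pos by (simp add: row_slot_def div_less_iff_less_mult)
  next
    fix i assume "i \<in> {i. i < (K - 1) * M \<and> i mod M < r}"
    then show "i \<in> minor_rows"
      using True q M_pos by (simp add: minor_rows_def row_slot_def less_mult_imp_div_less)
  qed
  moreover have "(K - 1) * r \<le> N"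
    using True r by (metis diff_le_self le_trans mult_le_mono2)
  ultimately show ?thesis
    using r by (simp add: card_less_mult_mod_less)
next
  case False
  then have "M < r" unfolding r_def using K_ge_2 by (simp add: diff_mult_distrib)
  then have "minor_rows = {..<N}"
    unfolding minor_rows_def using row_slot_less_M by (auto intro: less_trans)
  moreover have "N \<le> (K - 1) * r"
    using False \<open>M < r\<close> by (meson less_imp_le_nat mult_le_mono2 nat_le_linear order.trans)
  ultimately show ?thesis by simp
qed

lemma minor_rows_bounded: "{i. i < N \<and> i \<in> minor_rows} = minor_rows"
  unfolding minor_rows_def by auto

lemma minor_cols_bounded: "{j. j < K * r \<and> j \<in> minor_cols} = minor_cols"
  unfolding minor_cols_def using minor_col_less by auto

lemma card_minor_cols: "card minor_cols = card minor_rows"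
  unfolding minor_cols_def using strict_mono_on_imp_inj_on[OF minor_col_strict_mono] by (rule card_image)

definition minor :: "(nat \<times> nat \<times> nat \<Rightarrow> complex) \<Rightarrow> complex" where
  "minor a = det (submatrix (Atilde_ker a) minor_rows minor_cols)"

lemma minor_poly_fun: "minor \<in> poly_fun entries"
proof -
  have "poly_fun_mat entries (card minor_rows) (card minor_rows)
      (\<lambda>a. submatrix (Atilde_ker a) minor_rows minor_cols)"
    using poly_fun_mat_submatrix[OF Atilde_ker_poly_fun, of minor_rows minor_cols]
    unfolding minor_rows_bounded minor_cols_bounded card_minor_cols .
  then show ?thesis
    unfolding minor_def[abs_def] by (rule poly_fun_mat_det)
qed

lemma submatrix_Atilde_ker_witness:
  "submatrix (Atilde_ker witness) minor_rows minor_cols = (-1) \<cdot>\<^sub>m 1\<^sub>m (card minor_rows)"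
proof (rule eq_matI)
  have dims: "dim_row (Atilde_ker witness) = N" "dim_col (Atilde_ker witness) = K * r"
    using Atilde_carrier by auto
  fix m m' assume "m < dim_row ((-1) \<cdot>\<^sub>m 1\<^sub>m (card minor_rows) :: complex mat)"
    and "m' < dim_col ((-1) \<cdot>\<^sub>m 1\<^sub>m (card minor_rows) :: complex mat)"
  then have m: "m < card minor_rows" and m': "m' < card minor_rows" by auto
  have picks: "pick minor_rows m \<in> minor_rows" "pick minor_rows m' \<in> minor_rows"
    using pick_in_set_le m m' by auto
  have "pick minor_rows m = pick minor_rows m' \<longleftrightarrow> m = m'"
    using pick_mono_le[OF m] pick_mono_le[OF m'] by (metis nat_neq_iff)
  moreover have "pick minor_cols m' = minor_col (pick minor_rows m')"
    unfolding minor_cols_def by (rule pick_image_strict_mono_on[OF minor_col_strict_mono m'])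
  moreover have "submatrix (Atilde_ker witness) minor_rows minor_cols $$ (m, m') =
      Atilde_ker witness $$ (pick minor_rows m, pick minor_cols m')"
    using m m' by (intro submatrix_index) (simp_all add: dims minor_rows_bounded minor_cols_bounded card_minor_cols)
  ultimately show "submatrix (Atilde_ker witness) minor_rows minor_cols $$ (m, m') =
      ((-1) \<cdot>\<^sub>m 1\<^sub>m (card minor_rows)) $$ (m, m')"
    using m m' by (simp add: Atilde_ker_witness_minor_col[OF picks])
qed (simp_all add: dim_submatrix carrier_matD[OF Atilde_carrier] minor_rows_bounded minor_cols_bounded
    card_minor_cols)

lemma minor_witness_ne_0: "minor witness \<noteq> 0"
  unfolding minor_def submatrix_Atilde_ker_witness by simp

lemma rank_Atilde_eq_if_minor_ne_0:
  assumes "minor a \<noteq> 0" and nb: "null_basis_mat (A a) U r"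
  shows "vec_space.rank N (Atilde K N M a U) = min ((K - 1) * r) N"
proof (rule antisym[OF rank_Atilde_le[OF nb]])
  have "card {j. j < K * r \<and> j \<in> minor_cols} \<le> vec_space.rank N (Atilde_ker a)"
    using vec_space.rank_gt_minor[OF Atilde_carrier] assms(1) unfolding minor_def by blast
  also have "\<dots> \<le> vec_space.rank N (Atilde K N M a U)"
    by (rule rank_Atilde_kernel_mat_le[OF nb])
  finally show "min ((K - 1) * r) N \<le> vec_space.rank N (Atilde K N M a U)"
    unfolding minor_cols_bounded card_minor_cols card_minor_rows .
qed

end

theorem lemma3:
  fixes K M N :: nat and P :: "(nat \<times> nat \<times> nat \<Rightarrow> complex) measure"
  assumes "K \<ge> 2" and "0 < M" and "M \<le> N" and "K * M > N"
    and "prob_space P"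
    and "sets P = sets (entry_space K N M)"
    and "absolutely_continuous (entry_space K N M) P"
  shows "AE a in P. \<forall>U. null_basis_mat (Amat K N M a) U (K * M - N) \<longrightarrow>
            vec_space.rank N (Atilde K N M a U) = min ((K - 1) * (K * M - N)) N"
proof -
  interpret block_dims K N M
    using assms(1,2,4) by unfold_locales
  have "{a \<in> space (entry_space K N M). minor a = 0} \<in> null_sets (entry_space K N M)"
    unfolding entry_space_def entries_def[symmetric]
    by (rule poly_fun_zero_set_null[OF _ minor_poly_fun minor_witness_ne_0]) (simp add: entries_def)
  then have "{a \<in> space (entry_space K N M). minor a = 0} \<in> null_sets P"
    using assms(7) unfolding absolutely_continuous_def by blast
  moreover have "space P = space (entry_space K N M)"
    using assms(6) by (rule sets_eq_imp_space_eq)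
  ultimately show ?thesis
    unfolding r_def[symmetric] using rank_Atilde_eq_if_minor_ne_0 by (intro AE_I') auto
qed

end
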